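(* Let $|D_4^3\rangle=(|0111\rangle+|1011\rangle+|1101\rangle+|1110\rangle)/2$ and $\rho_{4,3}(\gamma)=\mathcal E_\gamma^{\otimes4}(|D_4^3\rangle\langle D_4^3|)$, $\gamma\in[0,1]$. Then $\rho_{4,3}(\gamma)\in\mathcal S$ if and only if $\gamma\ge1/2$.
   Context: $\mathcal E_\gamma$ is single-qubit amplitude damping with Kraus operators $|0\rangle\langle0|+\sqrt{1-\gamma}|1\rangle\langle1|$ and $\sqrt\gamma|0\rangle\langle1|$. $\mathcal S$ is the four-qubit stabilizer polytope (convex hull of pure stabilizer states $C|0000\rangle$, $C$ Clifford). *)

theory Defs
  imports Complex_Main
begin

text \<open>Four-qubit operators are represented as functions nat => nat => complex;
  only the entries with both indices in {0..<16} are meaningful.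
  The computational basis state |b0 b1 b2 b3> has index 8*b0+4*b1+2*b2+b3
  (qubit 0 is the most significant bit).\<close>

type_synonym op4 = "nat \<Rightarrow> nat \<Rightarrow> complex"

definition bitq :: "nat \<Rightarrow> nat \<Rightarrow> nat" where
  "bitq q i = (i div 2 ^ (3 - q)) mod 2"

definition mmult :: "op4 \<Rightarrow> op4 \<Rightarrow> op4" where
  "mmult A B = (\<lambda>i j. \<Sum>k<16. A i k * B k j)"

definition id4 :: op4 where
  "id4 = (\<lambda>i j. if i = j then 1 else 0)"

definition hadamard :: "nat \<Rightarrow> nat \<Rightarrow> complex" where
  "hadamard a b = (if a = 1 \<and> b = 1 then -1 else 1) / complex_of_real (sqrt 2)"

definition phaseS :: "nat \<Rightarrow> nat \<Rightarrow> complex" where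
  "phaseS a b = (if a = b then (if a = 1 then \<i> else 1) else 0)"

definition on_qubit :: "nat \<Rightarrow> (nat \<Rightarrow> nat \<Rightarrow> complex) \<Rightarrow> op4" where
  "on_qubit q U = (\<lambda>i j. U (bitq q i) (bitq q j) *
      (if (\<forall>p<4. p \<noteq> q \<longrightarrow> bitq p i = bitq p j) then 1 else 0))"

definition cnot :: "nat \<Rightarrow> nat \<Rightarrow> op4" where
  "cnot c t = (\<lambda>i j. if (\<forall>p<4. bitq p i =
        (if p = t then (bitq t j + bitq c j) mod 2 else bitq p j)) then 1 else 0)"

text \<open>The Clifford group on four qubits: generated by H and S on each qubit and CNOT
  between any two distinct qubits (global phases are irrelevant for the states C|0000>).\<close>
inductive_set clifford4 :: "op4 set" where
  clifford_id: "id4 \<in> clifford4"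
| clifford_H: "C \<in> clifford4 \<Longrightarrow> q < 4 \<Longrightarrow> mmult (on_qubit q hadamard) C \<in> clifford4"
| clifford_S: "C \<in> clifford4 \<Longrightarrow> q < 4 \<Longrightarrow> mmult (on_qubit q phaseS) C \<in> clifford4"
| clifford_CNOT: "C \<in> clifford4 \<Longrightarrow> c < 4 \<Longrightarrow> t < 4 \<Longrightarrow> c \<noteq> t \<Longrightarrow>
     mmult (cnot c t) C \<in> clifford4"

definition stab_dm :: "op4 \<Rightarrow> op4" where
  "stab_dm C = (\<lambda>a b. C a 0 * cnj (C b 0))"

definition pure_stabilizer_states :: "op4 set" where
  "pure_stabilizer_states = stab_dm ` clifford4"

definition in_stabilizer_polytope :: "op4 \<Rightarrow> bool" where
  "in_stabilizer_polytope \<rho> \<longleftrightarrow>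
     (\<exists>n::nat. \<exists>w::nat \<Rightarrow> real. \<exists>\<sigma>::nat \<Rightarrow> op4.
        (\<forall>k<n. 0 \<le> w k \<and> \<sigma> k \<in> pure_stabilizer_states) \<and>
        (\<Sum>k<n. w k) = 1 \<and>
        (\<forall>a<16. \<forall>b<16. \<rho> a b = (\<Sum>k<n. complex_of_real (w k) * \<sigma> k a b)))"

definition kraus_ad :: "real \<Rightarrow> nat \<Rightarrow> nat \<Rightarrow> nat \<Rightarrow> complex" where
  "kraus_ad g k a b =
     (if k = 0 then (if a = 0 \<and> b = 0 then 1
                     else if a = 1 \<and> b = 1 then complex_of_real (sqrt (1 - g)) else 0)
      else (if a = 0 \<and> b = 1 then complex_of_real (sqrt g) else 0))"

definition kraus_ad4 :: "real \<Rightarrow> nat \<Rightarrow> op4" where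
  "kraus_ad4 g k = (\<lambda>i j. \<Prod>q<4. kraus_ad g (bitq q k) (bitq q i) (bitq q j))"

definition amp_damp4 :: "real \<Rightarrow> op4 \<Rightarrow> op4" where
  "amp_damp4 g \<rho> = (\<lambda>a b. \<Sum>k<16. \<Sum>i<16. \<Sum>j<16.
       kraus_ad4 g k a i * \<rho> i j * cnj (kraus_ad4 g k b j))"

definition dicke43 :: "nat \<Rightarrow> complex" where
  "dicke43 i = (if i \<in> {7, 11, 13, 14} then 1/2 else 0)"

definition rho43 :: "real \<Rightarrow> op4" where
  "rho43 g = amp_damp4 g (\<lambda>a b. dicke43 a * cnj (dicke43 b))"

end

theory Submission
  imports Defs
begin

text \<open>
  For \<open>0 < \<gamma> < 1/2\<close> the state is separated from the stabilizer polytope by a linear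
  witness \<open>W\<close> with \<open>W(\<rho>) = 3\<gamma>(2\<gamma> - 1) < 0\<close>.  That \<open>W\<close> is nonnegative on pure stabilizer
  states comes from their amplitude structure: a stabilizer vector is \<open>c * \<i> powi f x\<close> on an
  affine subspace of \<open>\<bbbF>\<^sub>2\<^sup>4\<close> and vanishes elsewhere, with \<open>f\<close> a quadratic phase.  This form is
  preserved by \<open>H\<close>, \<open>S\<close> and CNOT, so all amplitudes of a stabilizer state have the same
  modulus and their support is closed under \<open>x \<oplus> y \<oplus> z\<close>; a Clifford change of basis turns
  \<open>W\<close> into a quadratic form for which these two facts suffice.  At \<open>\<gamma> = 0\<close> a second witness
  plays the same role.  For \<open>\<gamma> \<ge> 1/2\<close> the state is an explicit convex combination of
  21 stabilizer states, each prepared by a short Clifford circuit.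
\<close>

unbundle bit_operations_syntax

section \<open>Basis indices as bit strings\<close>

lemma bitq_eq: "bitq q i = of_bool (bit i (3 - q))"
  by (simp add: bitq_def bit_iff_odd odd_iff_mod_2_eq_one)

lemma bitq_flip_bit:
  "p < 4 \<Longrightarrow> q < 4 \<Longrightarrow> bitq p (flip_bit (3 - q) i) = (if p = q then 1 - bitq p i else bitq p i)"
  by (auto simp: bitq_eq bit_flip_bit_iff)

lemma less_16_iff_bits: "(i::nat) < 16 \<longleftrightarrow> (\<forall>n. bit i n \<longrightarrow> n < 4)"
proof -
  have "i < 2 ^ 4 \<longleftrightarrow> take_bit 4 i = i" by (simp add: take_bit_nat_eq_self_iff)
  also have "\<dots> \<longleftrightarrow> (\<forall>n. bit i n \<longrightarrow> n < 4)"
    by (auto simp: bit_eq_iff bit_take_bit_iff)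
  finally show ?thesis by simp
qed

lemma xor_less_16: "x < 16 \<Longrightarrow> y < 16 \<Longrightarrow> x XOR y < (16::nat)"
  by (auto simp: less_16_iff_bits bit_xor_iff)

lemma flip_bit_less_16: "n < 4 \<Longrightarrow> x < 16 \<Longrightarrow> flip_bit n x < (16::nat)"
  by (auto simp: less_16_iff_bits bit_flip_bit_iff)

lemma unset_bit_less_16: "x < 16 \<Longrightarrow> unset_bit n x < (16::nat)"
  by (auto simp: less_16_iff_bits bit_unset_bit_iff)

lemma set_bit_less_16: "n < 4 \<Longrightarrow> x < 16 \<Longrightarrow> set_bit n x < (16::nat)"
  by (auto simp: less_16_iff_bits bit_set_bit_iff)

lemma less_16_eqI:
  assumes "x < 16" "y < 16" "\<And>p. p < 4 \<Longrightarrow> bitq p x = bitq p y"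
  shows "x = (y::nat)"
proof (rule bit_eqI)
  fix n
  show "bit x n = bit y n"
  proof (cases "n < 4")
    case True
    then have "3 - (3 - n) = n" "3 - n < 4" by auto
    then show ?thesis using assms(3)[of "3 - n"] by (metis bitq_eq of_bool_eq_iff)
  qed (use assms(1,2) in \<open>auto simp: less_16_iff_bits\<close>)
qed

lemma less_16_cases:
  "(x::nat) < 16 \<Longrightarrow> x = 0 \<or> x = 1 \<or> x = 2 \<or> x = 3 \<or> x = 4 \<or> x = 5 \<or> x = 6 \<or> x = 7 \<or>
    x = 8 \<or> x = 9 \<or> x = 10 \<or> x = 11 \<or> x = 12 \<or> x = 13 \<or> x = 14 \<or> x = 15"
  by (simp add: numeral_eq_Suc less_Suc_eq)

lemma all_less_16: "(\<forall>i<16. P i) \<longleftrightarrow> P 0 \<and> P 1 \<and> P 2 \<and> P 3 \<and> P 4 \<and> P 5 \<and> P 6 \<and> P 7 \<and>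
    P 8 \<and> P 9 \<and> P 10 \<and> P 11 \<and> P 12 \<and> P 13 \<and> P 14 \<and> P (15::nat)"
  by (auto dest: less_16_cases)

lemma sum_less_16: "(\<Sum>k<(16::nat). f k) = f 0 + f 1 + f 2 + f 3 + f 4 + f 5 + f 6 + f 7 + f 8 + f 9
    + f 10 + f 11 + f 12 + f 13 + f 14 + (f 15 :: 'a::comm_monoid_add)"
  by (simp add: numeral_eq_Suc)

lemma prod_less_4: "(\<Prod>q<4. f q) = f 0 * f 1 * f 2 * (f (3::nat) :: 'a::comm_monoid_mult)"
  by (simp add: numeral_eq_Suc)

lemma xor_translate: "x' XOR (x' XOR x XOR y) XOR (x' XOR x XOR z) = x' XOR y XOR (z::nat)"
  by (rule bit_eqI) (auto simp: bit_xor_iff)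

lemma flip_bit_flip_bit [simp]: "flip_bit n (flip_bit n x) = (x::nat)"
  by (rule bit_eqI) (auto simp: bit_flip_bit_iff)

lemma eq_or_flip_bit_iff: "u = w \<or> u = flip_bit n w \<longleftrightarrow> (\<forall>m. m \<noteq> n \<longrightarrow> bit u m = bit w m)" for u w :: nat
proof
  assume "\<forall>m. m \<noteq> n \<longrightarrow> bit u m = bit w m"
  then show "u = w \<or> u = flip_bit n w"
    by (cases "bit u n = bit w n") (auto intro!: bit_eqI simp: bit_flip_bit_iff)
qed (auto simp: bit_flip_bit_iff)

lemma unset_set_bit_if_not_bit: "\<not> bit i n \<Longrightarrow> unset_bit n i = i \<and> set_bit n (i::nat) = flip_bit n i"
  by (auto intro!: bit_eqI simp: bit_simps)

lemma unset_set_bit_if_bit: "bit i n \<Longrightarrow> unset_bit n i = flip_bit n i \<and> set_bit n (i::nat) = i"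
  by (auto intro!: bit_eqI simp: bit_simps)

lemma unset_set_bit_of_eq_or_flip:
  assumes "u = w \<or> u = flip_bit n (w::nat)"
  shows "bit u n \<Longrightarrow> u = set_bit n w" and "\<not> bit u n \<Longrightarrow> u = unset_bit n w"
  using assms by (auto intro!: bit_eqI simp: bit_simps)

lemma unset_bit_ne_set_bit: "unset_bit n x \<noteq> set_bit n (x::nat)"
proof
  assume "unset_bit n x = set_bit n x"
  then have "bit (unset_bit n x) n = bit (set_bit n x) n" by simp
  then show False by (simp add: bit_simps)
qed

text \<open>
  The simplifier evaluates this form on numerals, also at the bit position \<open>Suc 0\<close> into which
  it normalizes \<open>1\<close>; it does not evaluate \<^const>\<open>flip_bit\<close> there.
\<close>

lemma flip_bit_nat_eq_arith: "flip_bit n (i::nat) = (if bit i n then i - 2 ^ n else i + 2 ^ n)"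
proof (cases "bit i n")
  case True
  have "set_bit n (unset_bit n i) = i"
    using True by (auto intro!: bit_eqI simp: bit_simps)
  then have "i = unset_bit n i + 2 ^ n"
    by (metis set_bit_eq bit_unset_bit_iff of_bool_eq(2) mult_1)
  then show ?thesis using True by (simp add: flip_bit_eq_if)
qed (simp add: flip_bit_eq_if set_bit_eq)

section \<open>Gates acting on amplitude vectors\<close>

definition apply_op :: "op4 \<Rightarrow> (nat \<Rightarrow> complex) \<Rightarrow> nat \<Rightarrow> complex" where
  "apply_op M v i = (\<Sum>k<16. M i k * v k)"

lemma mmult_column: "mmult M C i 0 = apply_op M (\<lambda>k. C k 0) i"
  by (simp add: mmult_def apply_op_def)

lemma apply_op_cong: "(\<And>k. k < 16 \<Longrightarrow> v k = w k) \<Longrightarrow> apply_op M v i = apply_op M w i"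
  by (simp add: apply_op_def)

lemma on_qubit_support_iff:
  assumes "q < 4" "i < 16" "k < 16"
  shows "(\<forall>p<4. p \<noteq> q \<longrightarrow> bitq p i = bitq p k) \<longleftrightarrow> k = i \<or> k = flip_bit (3 - q) i"
proof
  assume agree: "\<forall>p<4. p \<noteq> q \<longrightarrow> bitq p i = bitq p k"
  show "k = i \<or> k = flip_bit (3 - q) i"
  proof (cases "bitq q k = bitq q i")
    case True
    then have "bitq p k = bitq p i" if "p < 4" for p
      using agree that by (cases "p = q") auto
    then have "k = i" by (rule less_16_eqI[OF assms(3,2)])
    then show ?thesis ..
  next
    case False
    then have "bitq p k = bitq p (flip_bit (3 - q) i)" if "p < 4" for p
      using agree that assms(1) by (cases "p = q") (auto simp: bitq_eq bit_flip_bit_iff)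
    moreover have "flip_bit (3 - q) i < 16" using assms(2) by (simp add: flip_bit_less_16)
    ultimately have "k = flip_bit (3 - q) i" using less_16_eqI[OF assms(3)] by blast
    then show ?thesis ..
  qed
next
  assume "k = i \<or> k = flip_bit (3 - q) i"
  then show "\<forall>p<4. p \<noteq> q \<longrightarrow> bitq p i = bitq p k"
    using assms(1) by (auto simp: bitq_flip_bit)
qed

lemma apply_on_qubit:
  assumes q: "q < 4" and i: "i < 16"
  shows "apply_op (on_qubit q U) v i =
    U (bitq q i) (bitq q i) * v i + U (bitq q i) (1 - bitq q i) * v (flip_bit (3 - q) i)"
proof -
  let ?j = "flip_bit (3 - q) i"
  have j: "?j < 16" "?j \<noteq> i" using q i by (auto simp: flip_bit_less_16 bit_eq_iff bit_flip_bit_iff)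
  have "on_qubit q U i k = (if k = i then U (bitq q i) (bitq q i)
      else if k = ?j then U (bitq q i) (1 - bitq q i) else 0)" if "k < 16" for k
    using on_qubit_support_iff[OF q i that] j(2) q by (auto simp: on_qubit_def bitq_flip_bit)
  then have "apply_op (on_qubit q U) v i = (\<Sum>k<16. (if k = i then U (bitq q i) (bitq q i) * v i else 0)
      + (if k = ?j then U (bitq q i) (1 - bitq q i) * v ?j else 0))"
    unfolding apply_op_def using j(2) by (intro sum.cong) auto
  also have "\<dots> = U (bitq q i) (bitq q i) * v i + U (bitq q i) (1 - bitq q i) * v ?j"
    using i j(1) by (simp add: sum.distrib)
  finally show ?thesis .
qed

lemma apply_hadamard:
  assumes "q < 4" "i < 16"
  shows "apply_op (on_qubit q hadamard) v i = (v (unset_bit (3 - q) i)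
    + (if bit i (3 - q) then -1 else 1) * v (set_bit (3 - q) i)) / complex_of_real (sqrt 2)"
  using assms unset_set_bit_if_not_bit[of i "3 - q"] unset_set_bit_if_bit[of i "3 - q"]
  by (cases "bit i (3 - q)")
    (auto simp: apply_on_qubit hadamard_def bitq_eq add_divide_distrib diff_divide_distrib)

lemma apply_hadamard_flip:
  "q < 4 \<Longrightarrow> i < 16 \<Longrightarrow> apply_op (on_qubit q hadamard) v i =
    (if bit i (3 - q) then v (flip_bit (3 - q) i) - v i else v i + v (flip_bit (3 - q) i))
    / complex_of_real (sqrt 2)"
  by (simp add: apply_on_qubit hadamard_def bitq_eq diff_divide_distrib add_divide_distrib)

lemma apply_phaseS:
  "q < 4 \<Longrightarrow> i < 16 \<Longrightarrow> apply_op (on_qubit q phaseS) v i = (if bit i (3 - q) then \<i> else 1) * v i"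
  by (simp add: apply_on_qubit phaseS_def bitq_eq)

definition cnot_index :: "nat \<Rightarrow> nat \<Rightarrow> nat \<Rightarrow> nat" where
  "cnot_index c t i = (if bit i (3 - c) then flip_bit (3 - t) i else i)"

lemma bitq_cnot_index:
  "p < 4 \<Longrightarrow> t < 4 \<Longrightarrow> bitq p (cnot_index c t i) = (if p = t then (bitq t i + bitq c i) mod 2 else bitq p i)"
  by (auto simp: cnot_index_def bitq_eq bit_flip_bit_iff)

lemma cnot_index_less_16: "t < 4 \<Longrightarrow> i < 16 \<Longrightarrow> cnot_index c t i < 16"
  by (simp add: cnot_index_def flip_bit_less_16)

lemma cnot_index_involution: "c \<noteq> t \<Longrightarrow> c < 4 \<Longrightarrow> t < 4 \<Longrightarrow> cnot_index c t (cnot_index c t i) = i"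
  by (auto simp: cnot_index_def bit_flip_bit_iff)

lemma cnot_entry:
  assumes "c < 4" "t < 4" "c \<noteq> t" "i < 16" "k < 16"
  shows "cnot c t i k = of_bool (k = cnot_index c t i)"
proof -
  have "(\<forall>p<4. bitq p i = (if p = t then (bitq t k + bitq c k) mod 2 else bitq p k)) \<longleftrightarrow>
        (\<forall>p<4. bitq p i = bitq p (cnot_index c t k))"
    using assms(2) by (simp add: bitq_cnot_index)
  also have "\<dots> \<longleftrightarrow> i = cnot_index c t k"
    using assms by (auto intro: less_16_eqI cnot_index_less_16)
  also have "\<dots> \<longleftrightarrow> k = cnot_index c t i"
    using assms cnot_index_involution by metis
  finally show ?thesis by (simp add: cnot_def)
qed

lemma apply_cnot:
  assumes "c < 4" "t < 4" "c \<noteq> t" "i < 16"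
  shows "apply_op (cnot c t) v i = v (cnot_index c t i)"
proof -
  have "apply_op (cnot c t) v i = (\<Sum>k<16. if k = cnot_index c t i then v k else 0)"
    unfolding apply_op_def by (intro sum.cong) (simp_all add: cnot_entry assms)
  then show ?thesis using cnot_index_less_16 assms by simp
qed

section \<open>The amplitude form of stabilizer states\<close>

definition xor_affine :: "nat set \<Rightarrow> bool" where
  "xor_affine A \<longleftrightarrow> A \<subseteq> {..<16} \<and> (\<forall>x\<in>A. \<forall>y\<in>A. \<forall>z\<in>A. x XOR y XOR z \<in> A)"

definition xor_affine_map :: "nat set \<Rightarrow> (nat \<Rightarrow> nat) \<Rightarrow> bool" where
  "xor_affine_map B s \<longleftrightarrow> (\<forall>x\<in>B. \<forall>y\<in>B. \<forall>z\<in>B. s (x XOR y XOR z) = s x XOR s y XOR s z)"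

definition second_diff :: "(nat \<Rightarrow> int) \<Rightarrow> nat \<Rightarrow> nat \<Rightarrow> nat \<Rightarrow> int" where
  "second_diff f x y z = f x - f y - f z + f (x XOR y XOR z)"

text \<open>
  A coordinate-free rendering of the phases \<open>f = l + 2 q (mod 4)\<close>, \<open>l\<close> affine and \<open>q\<close> quadratic
  over \<open>\<bbbF>\<^sub>2\<close>, that occur in the Dehaene--De Moor form of stabilizer states.
\<close>

definition quadratic_phase :: "nat set \<Rightarrow> (nat \<Rightarrow> int) \<Rightarrow> bool" where
  "quadratic_phase A f \<longleftrightarrow> (\<forall>x\<in>A. \<forall>y\<in>A. \<forall>z\<in>A. even (second_diff f x y z) \<and>
     (\<forall>x'\<in>A. second_diff f x' (x' XOR x XOR y) (x' XOR x XOR z) mod 4 = second_diff f x y z mod 4))"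

definition affine_bit :: "nat set \<Rightarrow> (nat \<Rightarrow> int) \<Rightarrow> bool" where
  "affine_bit A u \<longleftrightarrow> (\<forall>x\<in>A. u x = 0 \<or> u x = 1) \<and>
     (\<forall>x\<in>A. \<forall>y\<in>A. \<forall>z\<in>A. u (x XOR y XOR z) = (u x + u y + u z) mod 2)"

definition stabilizer_form :: "(nat \<Rightarrow> complex) \<Rightarrow> bool" where
  "stabilizer_form v \<longleftrightarrow> (\<exists>A f c. xor_affine A \<and> quadratic_phase A f \<and>
     (\<forall>x<16. v x = (if x \<in> A then c * \<i> powi f x else 0)))"

lemma xor_affineD: "xor_affine A \<Longrightarrow> x \<in> A \<Longrightarrow> y \<in> A \<Longrightarrow> z \<in> A \<Longrightarrow> x XOR y XOR z \<in> A"
  and xor_affine_less_16: "xor_affine A \<Longrightarrow> x \<in> A \<Longrightarrow> x < 16"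
  by (auto simp: xor_affine_def)

lemma quadratic_phaseI:
  assumes "\<And>x y z. x \<in> A \<Longrightarrow> y \<in> A \<Longrightarrow> z \<in> A \<Longrightarrow> even (second_diff f x y z)"
    and "\<And>x y z x'. x \<in> A \<Longrightarrow> y \<in> A \<Longrightarrow> z \<in> A \<Longrightarrow> x' \<in> A \<Longrightarrow>
      second_diff f x' (x' XOR x XOR y) (x' XOR x XOR z) mod 4 = second_diff f x y z mod 4"
  shows "quadratic_phase A f"
  using assms by (simp add: quadratic_phase_def)

lemma quadratic_phase_even:
    "quadratic_phase A f \<Longrightarrow> x \<in> A \<Longrightarrow> y \<in> A \<Longrightarrow> z \<in> A \<Longrightarrow> even (second_diff f x y z)"
  and quadratic_phase_translate: "quadratic_phase A f \<Longrightarrow> x \<in> A \<Longrightarrow> y \<in> A \<Longrightarrow> z \<in> A \<Longrightarrow> x' \<in> A \<Longrightarrow>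
    second_diff f x' (x' XOR x XOR y) (x' XOR x XOR z) mod 4 = second_diff f x y z mod 4"
  by (auto simp: quadratic_phase_def)

lemma affine_bitD: "affine_bit A u \<Longrightarrow> x \<in> A \<Longrightarrow> u x = 0 \<or> u x = 1"
  and affine_bit_xor: "affine_bit A u \<Longrightarrow> x \<in> A \<Longrightarrow> y \<in> A \<Longrightarrow> z \<in> A \<Longrightarrow>
    u (x XOR y XOR z) = (u x + u y + u z) mod 2"
  by (auto simp: affine_bit_def)

lemma stabilizer_formI:
  "xor_affine A \<Longrightarrow> quadratic_phase A f \<Longrightarrow> (\<And>x. x < 16 \<Longrightarrow> v x = (if x \<in> A then c * \<i> powi f x else 0))
    \<Longrightarrow> stabilizer_form v"
  unfolding stabilizer_form_def by blast

lemma quadratic_phase_add: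
  assumes f: "quadratic_phase A f" and g: "quadratic_phase A g"
  shows "quadratic_phase A (\<lambda>x. f x + g x)"
proof (rule quadratic_phaseI)
  have sd: "second_diff (\<lambda>x. f x + g x) x y z = second_diff f x y z + second_diff g x y z" for x y z
    by (simp add: second_diff_def)
  show "even (second_diff (\<lambda>x. f x + g x) x y z)" if "x \<in> A" "y \<in> A" "z \<in> A" for x y z
    using quadratic_phase_even[OF f that] quadratic_phase_even[OF g that] by (simp add: sd)
  show "second_diff (\<lambda>x. f x + g x) x' (x' XOR x XOR y) (x' XOR x XOR z) mod 4
      = second_diff (\<lambda>x. f x + g x) x y z mod 4" if "x \<in> A" "y \<in> A" "z \<in> A" "x' \<in> A" for x y z x'
    unfolding sd
    by (rule mod_add_cong quadratic_phase_translate[OF f that] quadratic_phase_translate[OF g that])+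
qed

lemma quadratic_phase_cmult:
  assumes f: "quadratic_phase A f"
  shows "quadratic_phase A (\<lambda>x. k * f x)"
proof (rule quadratic_phaseI)
  have sd: "second_diff (\<lambda>x. k * f x) x y z = k * second_diff f x y z" for x y z
    by (simp add: second_diff_def algebra_simps)
  show "even (second_diff (\<lambda>x. k * f x) x y z)" if "x \<in> A" "y \<in> A" "z \<in> A" for x y z
    using quadratic_phase_even[OF f that] by (simp add: sd)
  show "second_diff (\<lambda>x. k * f x) x' (x' XOR x XOR y) (x' XOR x XOR z) mod 4
      = second_diff (\<lambda>x. k * f x) x y z mod 4" if "x \<in> A" "y \<in> A" "z \<in> A" "x' \<in> A" for x y z x'
    unfolding sd by (rule mod_mult_cong refl quadratic_phase_translate[OF f that])+
qed

lemma second_diff_comp: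
  "s (x XOR y XOR z) = s x XOR s y XOR s z \<Longrightarrow>
    second_diff (\<lambda>x. f (s x)) x y z = second_diff f (s x) (s y) (s z)"
  by (simp add: second_diff_def)

lemma quadratic_phase_comp:
  assumes f: "quadratic_phase A f" and into: "s ` B \<subseteq> A" and s: "xor_affine_map B s"
  shows "quadratic_phase B (\<lambda>x. f (s x))"
proof (rule quadratic_phaseI)
  have lin: "s (x XOR y XOR z) = s x XOR s y XOR s z" if "x \<in> B" "y \<in> B" "z \<in> B" for x y z
    using s that by (simp add: xor_affine_map_def)
  show "even (second_diff (\<lambda>x. f (s x)) x y z)" if "x \<in> B" "y \<in> B" "z \<in> B" for x y z
    using quadratic_phase_even[OF f] into that by (simp add: second_diff_comp lin image_subset_iff)
  fix x y z x' assume xyz: "x \<in> B" "y \<in> B" "z \<in> B" "x' \<in> B"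
  have "second_diff (\<lambda>x. f (s x)) x' (x' XOR x XOR y) (x' XOR x XOR z)
      = second_diff f (s x') (s x' XOR s x XOR s y) (s x' XOR s x XOR s z)"
    using xyz by (simp add: second_diff_def lin xor_translate)
  also have "\<dots> mod 4 = second_diff f (s x) (s y) (s z) mod 4"
    using quadratic_phase_translate[OF f] into xyz by (simp add: image_subset_iff)
  also have "second_diff f (s x) (s y) (s z) = second_diff (\<lambda>x. f (s x)) x y z"
    using xyz by (simp add: second_diff_comp lin)
  finally show "second_diff (\<lambda>x. f (s x)) x' (x' XOR x XOR y) (x' XOR x XOR z) mod 4
      = second_diff (\<lambda>x. f (s x)) x y z mod 4" .
qed

lemma affine_bit_quadratic_phase:
  assumes u: "affine_bit A u"
  shows "quadratic_phase A u"
proof (rule quadratic_phaseI)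
  show "even (second_diff u x y z)" if "x \<in> A" "y \<in> A" "z \<in> A" for x y z
    using affine_bitD[OF u] that by (simp add: second_diff_def affine_bit_xor[OF u])
  fix x y z x' assume xyz: "x \<in> A" "y \<in> A" "z \<in> A" "x' \<in> A"
  have "u x' = 0 \<or> u x' = 1" "u x = 0 \<or> u x = 1" "u y = 0 \<or> u y = 1" "u z = 0 \<or> u z = 1"
    using affine_bitD[OF u] xyz by auto
  then show "second_diff u x' (x' XOR x XOR y) (x' XOR x XOR z) mod 4 = second_diff u x y z mod 4"
    using xyz by (elim disjE) (simp_all add: second_diff_def xor_translate affine_bit_xor[OF u])
qed

lemma quadratic_phase_double_product:
  assumes u: "affine_bit A u" and w: "affine_bit A w"
  shows "quadratic_phase A (\<lambda>x. 2 * u x * w x)"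
proof (rule quadratic_phaseI)
  show "even (second_diff (\<lambda>x. 2 * u x * w x) x y z)" for x y z
    by (simp add: second_diff_def)
  fix x y z x' assume xyz: "x \<in> A" "y \<in> A" "z \<in> A" "x' \<in> A"
  have "u x' = 0 \<or> u x' = 1" "u x = 0 \<or> u x = 1" "u y = 0 \<or> u y = 1" "u z = 0 \<or> u z = 1"
       "w x' = 0 \<or> w x' = 1" "w x = 0 \<or> w x = 1" "w y = 0 \<or> w y = 1" "w z = 0 \<or> w z = 1"
    using affine_bitD[OF u] affine_bitD[OF w] xyz by auto
  then show "second_diff (\<lambda>x. 2 * u x * w x) x' (x' XOR x XOR y) (x' XOR x XOR z) mod 4
      = second_diff (\<lambda>x. 2 * u x * w x) x y z mod 4"
    using xyz by (elim disjE)
      (simp_all add: second_diff_def xor_translate affine_bit_xor[OF u] affine_bit_xor[OF w])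
qed

lemma affine_bit_bit: "affine_bit A (\<lambda>x. of_bool (bit x n))"
  by (auto simp: affine_bit_def bit_xor_iff)

lemma affine_bit_comp:
  assumes u: "affine_bit A u" and into: "s ` B \<subseteq> A" and s: "xor_affine_map B s"
  shows "affine_bit B (\<lambda>x. u (s x))"
  using affine_bitD[OF u] affine_bit_xor[OF u] into s
  by (auto simp: affine_bit_def xor_affine_map_def image_subset_iff)

lemma i_powi_mod_4: "\<i> powi (e mod 4) = \<i> powi e"
proof -
  have "\<i> powi e = \<i> powi (4 * (e div 4)) * \<i> powi (e mod 4)"
    by (simp flip: power_int_add)
  also have "\<i> powi (4 * (e div 4)) = 1"
    by (simp add: power_int_mult)
  finally show ?thesis by simp
qed

lemma stabilizer_form_ket0: "stabilizer_form (\<lambda>i. id4 i 0)"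
proof (rule stabilizer_formI[of "{0}" "\<lambda>x. 0" _ 1])
  show "xor_affine {0}" by (simp add: xor_affine_def)
  show "quadratic_phase {0} (\<lambda>x. 0)" by (simp add: quadratic_phase_def second_diff_def)
qed (simp add: id4_def)

lemma stabilizer_form_phaseS:
  assumes "stabilizer_form v" "q < 4"
  shows "stabilizer_form (apply_op (on_qubit q phaseS) v)"
proof -
  obtain A f c where A: "xor_affine A" and f: "quadratic_phase A f"
    and v: "\<And>x. x < 16 \<Longrightarrow> v x = (if x \<in> A then c * \<i> powi f x else 0)"
    using assms(1) by (auto simp: stabilizer_form_def)
  show ?thesis
  proof (rule stabilizer_formI[OF A quadratic_phase_add[OF f affine_bit_quadratic_phase[OF affine_bit_bit]]])
    fix x :: nat assume "x < 16"
    then show "apply_op (on_qubit q phaseS) v x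
        = (if x \<in> A then c * \<i> powi (f x + of_bool (bit x (3 - q))) else 0)"
      using assms(2) by (simp add: apply_phaseS v power_int_add)
  qed
qed

lemma cnot_index_xor_affine_map: "c < 4 \<Longrightarrow> t < 4 \<Longrightarrow> c \<noteq> t \<Longrightarrow> xor_affine_map B (cnot_index c t)"
  unfolding xor_affine_map_def cnot_index_def
  by (auto intro!: bit_eqI simp: bit_xor_iff bit_flip_bit_iff)

lemma stabilizer_form_cnot:
  assumes "stabilizer_form v" "c < 4" "t < 4" "c \<noteq> t"
  shows "stabilizer_form (apply_op (cnot c t) v)"
proof -
  obtain A f a where A: "xor_affine A" and f: "quadratic_phase A f"
    and v: "\<And>x. x < 16 \<Longrightarrow> v x = (if x \<in> A then a * \<i> powi f x else 0)"
    using assms(1) by (auto simp: stabilizer_form_def)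
  define B where "B = {x. x < 16 \<and> cnot_index c t x \<in> A}"
  have lin: "xor_affine_map B (cnot_index c t)"
    using assms(2-4) by (rule cnot_index_xor_affine_map)
  have "xor_affine B"
    using lin xor_affineD[OF A] assms(3)
    by (auto simp: xor_affine_def xor_affine_map_def B_def xor_less_16)
  moreover have "quadratic_phase B (\<lambda>x. f (cnot_index c t x))"
    using lin by (intro quadratic_phase_comp[OF f]) (auto simp: B_def)
  ultimately show ?thesis
    by (rule stabilizer_formI)
      (use assms(2-4) in \<open>simp add: apply_cnot v cnot_index_less_16 B_def\<close>)
qed

subsection \<open>Closure under the Hadamard gate\<close>

lemma mod_4_xor_combination:
  fixes b1 b2 b3 d1 d2 d3 d4 :: int
  assumes b: "b1 \<in> {0, 1}" "b2 \<in> {0, 1}" "b3 \<in> {0, 1}"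
    and d: "(d4 - d3) mod 4 = (d2 - d1) mod 4" "even (d2 - d1)"
  shows "(2 * ((b1 + b2 + b3) mod 2) + d4) mod 4 = ((2 * b1 + d1) - (2 * b2 + d2) + (2 * b3 + d3)) mod 4"
proof -
  have "4 dvd (d4 - d3) - (d2 - d1)" using d(1) by (simp add: mod_eq_dvd_iff)
  then obtain k where k: "(d4 - d3) - (d2 - d1) = 4 * k" by (elim dvdE)
  obtain m where m: "d2 - d1 = 2 * m" using d(2) by (elim evenE)
  obtain j where j: "(b1 + b2 + b3) mod 2 - b1 + b2 - b3 = 2 * j" using b by auto
  have "(2 * ((b1 + b2 + b3) mod 2) + d4) - ((2 * b1 + d1) - (2 * b2 + d2) + (2 * b3 + d3))
      = 4 * (j + m + k)"
    using j m k by (simp add: algebra_simps)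
  then show ?thesis by (simp add: mod_eq_dvd_iff)
qed

lemma even_mod_4_cases: "even (a::int) \<Longrightarrow> a mod 4 = 0 \<or> a mod 4 = 2"
  by presburger

lemma odd_mod_4_cases: "odd (a::int) \<Longrightarrow> a mod 4 = 1 \<or> a mod 4 = 3"
  by presburger

lemma odd_mod_4_half_xor:
  fixes a b c d :: int
  assumes "odd a" "odd b" "odd c" "d mod 4 = (a - b + c) mod 4"
  shows "d mod 4 div 2 = (a mod 4 div 2 + b mod 4 div 2 + c mod 4 div 2) mod 2"
proof -
  have "(a - b + c) mod 4 = (a mod 4 - b mod 4 + c mod 4) mod 4"
    by (intro mod_add_cong mod_diff_cong) simp_all
  then have "d mod 4 = (a mod 4 - b mod 4 + c mod 4) mod 4"
    using assms(4) by simp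
  then show ?thesis
    using odd_mod_4_cases[OF assms(1)] odd_mod_4_cases[OF assms(2)] odd_mod_4_cases[OF assms(3)]
    by (elim disjE) simp_all
qed

text \<open>
  Under \<open>H\<close> on bit \<open>n\<close> the amplitudes at \<^term>\<open>unset_bit n x\<close> and \<^term>\<open>set_bit n x\<close> meet
  at \<open>x\<close>; this is the exponent of their relative phase, sign of the Hadamard matrix included.
\<close>

definition hadamard_phase :: "(nat \<Rightarrow> int) \<Rightarrow> nat \<Rightarrow> nat \<Rightarrow> int" where
  "hadamard_phase f n x = 2 * of_bool (bit x n) + (f (set_bit n x) - f (unset_bit n x))"

lemma second_diff_unset_set:
  "second_diff f (unset_bit n x) (set_bit n x) (unset_bit n y)
    = (f (set_bit n y) - f (unset_bit n y)) - (f (set_bit n x) - f (unset_bit n x))"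
proof -
  have "unset_bit n x XOR set_bit n x XOR unset_bit n y = set_bit n (y::nat)"
    by (auto intro!: bit_eqI simp: bit_simps)
  then show ?thesis by (simp add: second_diff_def)
qed

definition flip_hull :: "nat \<Rightarrow> nat set \<Rightarrow> nat set" where
  "flip_hull n A = {x. x < 16 \<and> (x \<in> A \<or> flip_bit n x \<in> A)}"

definition flip_rep :: "nat set \<Rightarrow> nat \<Rightarrow> nat \<Rightarrow> nat" where
  "flip_rep A n x = (if x \<in> A then x else flip_bit n x)"

context
  fixes A :: "nat set" and f :: "nat \<Rightarrow> int" and c :: complex and v :: "nat \<Rightarrow> complex" and q :: nat
  assumes A: "xor_affine A" and f: "quadratic_phase A f"
    and v: "\<And>x. x < 16 \<Longrightarrow> v x = (if x \<in> A then c * \<i> powi f x else 0)"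
    and q: "q < 4"
begin

context
  assumes full: "\<And>x. x \<in> A \<Longrightarrow> flip_bit (3 - q) x \<in> A"
begin

lemma unset_set_bit_mem_iff:
  "unset_bit (3 - q) x \<in> A \<longleftrightarrow> x \<in> A" "set_bit (3 - q) x \<in> A \<longleftrightarrow> x \<in> A"
proof -
  have "flip_bit (3 - q) x \<in> A \<longleftrightarrow> x \<in> A"
    using full[of x] full[of "flip_bit (3 - q) x"] by auto
  then show "unset_bit (3 - q) x \<in> A \<longleftrightarrow> x \<in> A" "set_bit (3 - q) x \<in> A \<longleftrightarrow> x \<in> A"
    using unset_set_bit_if_bit[of x "3 - q"] unset_set_bit_if_not_bit[of x "3 - q"]
    by (cases "bit x (3 - q)"; simp)+
qed

lemma hadamard_phase_parity:
  "x \<in> A \<Longrightarrow> y \<in> A \<Longrightarrow> even (hadamard_phase f (3 - q) y - hadamard_phase f (3 - q) x)"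
  using quadratic_phase_even[OF f, of "unset_bit (3 - q) x" "set_bit (3 - q) x" "unset_bit (3 - q) y"]
  by (simp add: unset_set_bit_mem_iff second_diff_unset_set hadamard_phase_def)

lemma hadamard_phase_translate:
  assumes xyz: "x \<in> A" "y \<in> A" "z \<in> A"
  shows "hadamard_phase f (3 - q) (x XOR y XOR z) mod 4
    = (hadamard_phase f (3 - q) x - hadamard_phase f (3 - q) y + hadamard_phase f (3 - q) z) mod 4"
proof -
  let ?n = "3 - q" and ?d = "\<lambda>x. f (set_bit (3 - q) x) - f (unset_bit (3 - q) x)"
  have "unset_bit ?n z XOR unset_bit ?n x XOR set_bit ?n x = set_bit ?n z"
    "unset_bit ?n z XOR unset_bit ?n x XOR unset_bit ?n y = unset_bit ?n (x XOR y XOR z)"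
    by (auto intro!: bit_eqI simp: bit_simps)
  then have "(?d (x XOR y XOR z) - ?d z) mod 4 = (?d y - ?d x) mod 4"
    using quadratic_phase_translate[OF f, of "unset_bit ?n x" "set_bit ?n x" "unset_bit ?n y" "unset_bit ?n z"]
      xyz by (simp add: unset_set_bit_mem_iff second_diff_unset_set)
  moreover have "even (?d y - ?d x)"
    using hadamard_phase_parity[OF xyz(1,2)] by (simp add: hadamard_phase_def)
  moreover have "of_bool (bit (x XOR y XOR z) ?n)
      = (of_bool (bit x ?n) + of_bool (bit y ?n) + of_bool (bit z ?n)) mod (2::int)"
    by (auto simp: bit_xor_iff)
  ultimately show ?thesis
    unfolding hadamard_phase_def by (simp add: mod_4_xor_combination)
qed

lemma apply_hadamard_full:
  assumes "x \<in> A"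
  shows "apply_op (on_qubit q hadamard) v x
    = c / complex_of_real (sqrt 2) * \<i> powi f (unset_bit (3 - q) x) * (1 + \<i> powi hadamard_phase f (3 - q) x)"
proof -
  have x: "x < 16" using xor_affine_less_16[OF A assms] .
  have "v (set_bit (3 - q) x) = c * \<i> powi f (unset_bit (3 - q) x)
      * \<i> powi (f (set_bit (3 - q) x) - f (unset_bit (3 - q) x))"
    using v[OF set_bit_less_16[OF _ x]] assms q by (simp add: unset_set_bit_mem_iff flip: power_int_add)
  moreover have "v (unset_bit (3 - q) x) = c * \<i> powi f (unset_bit (3 - q) x)"
    using v[OF unset_bit_less_16[OF x]] assms by (simp add: unset_set_bit_mem_iff)
  moreover have "\<i> powi hadamard_phase f (3 - q) x = (if bit x (3 - q) then -1 else 1)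
      * \<i> powi (f (set_bit (3 - q) x) - f (unset_bit (3 - q) x))"
    unfolding hadamard_phase_def by (subst power_int_add) (auto simp: power_int_mult)
  ultimately show ?thesis
    by (simp add: apply_hadamard[OF q x] field_simps)
qed

lemma apply_hadamard_full_outside: "x < 16 \<Longrightarrow> x \<notin> A \<Longrightarrow> apply_op (on_qubit q hadamard) v x = 0"
  using v[OF unset_bit_less_16] v[OF set_bit_less_16] q
  by (simp add: apply_hadamard unset_set_bit_mem_iff)

text \<open>
  With \<open>T\<close> the Hadamard phase, the factor \<open>1 + \<i> powi T\<close> is \<open>2\<close> or \<open>0\<close> for even \<open>T\<close>,
  cutting the support down to \<open>T = 0 (mod 4)\<close>, and \<open>(1 + \<i>) * \<i> powi -t\<close> with an affine
  bit \<open>t\<close> for odd \<open>T\<close>.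
\<close>

lemma stabilizer_form_hadamard_even:
  assumes even: "\<And>x. x \<in> A \<Longrightarrow> even (hadamard_phase f (3 - q) x)"
  shows "stabilizer_form (apply_op (on_qubit q hadamard) v)"
proof -
  define B where "B = {x \<in> A. hadamard_phase f (3 - q) x mod 4 = 0}"
  have "xor_affine B"
    using A hadamard_phase_translate by (auto simp: xor_affine_def B_def)
  moreover have "quadratic_phase B (\<lambda>x. f (unset_bit (3 - q) x))"
    by (intro quadratic_phase_comp[OF f])
      (auto intro!: bit_eqI simp: B_def unset_set_bit_mem_iff xor_affine_map_def bit_simps)
  ultimately show ?thesis
  proof (rule stabilizer_formI[where c = "2 * c / complex_of_real (sqrt 2)"])
    fix x :: nat assume x: "x < 16"
    show "apply_op (on_qubit q hadamard) v x
      = (if x \<in> B then 2 * c / complex_of_real (sqrt 2) * \<i> powi f (unset_bit (3 - q) x) else 0)"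
    proof (cases "x \<in> A")
      case True
      have "hadamard_phase f (3 - q) x mod 4 = 0 \<or> hadamard_phase f (3 - q) x mod 4 = 2"
        using even[OF True] by (rule even_mod_4_cases)
      then show ?thesis
        using True i_powi_mod_4[of "hadamard_phase f (3 - q) x", symmetric]
        by (auto simp: apply_hadamard_full B_def)
    qed (use x apply_hadamard_full_outside in \<open>simp add: B_def\<close>)
  qed
qed

lemma stabilizer_form_hadamard_odd:
  assumes odd: "\<And>x. x \<in> A \<Longrightarrow> odd (hadamard_phase f (3 - q) x)"
  shows "stabilizer_form (apply_op (on_qubit q hadamard) v)"
proof -
  define t where "t x = hadamard_phase f (3 - q) x mod 4 div 2" for x
  have "affine_bit A t"
    unfolding affine_bit_def t_def
    using odd_mod_4_half_xor[OF odd odd odd hadamard_phase_translate] by auto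
  then have "quadratic_phase A (\<lambda>x. f (unset_bit (3 - q) x) + -1 * t x)"
    by (intro quadratic_phase_add quadratic_phase_comp[OF f] quadratic_phase_cmult affine_bit_quadratic_phase)
      (auto intro!: bit_eqI simp: unset_set_bit_mem_iff xor_affine_map_def bit_simps)
  with A show ?thesis
  proof (rule stabilizer_formI[where c = "c * (1 + \<i>) / complex_of_real (sqrt 2)"])
    fix x :: nat assume x: "x < 16"
    show "apply_op (on_qubit q hadamard) v x = (if x \<in> A
      then c * (1 + \<i>) / complex_of_real (sqrt 2) * \<i> powi (f (unset_bit (3 - q) x) + -1 * t x) else 0)"
    proof (cases "x \<in> A")
      case True
      then have "hadamard_phase f (3 - q) x mod 4 = 1 \<and> t x = 0 \<or> hadamard_phase f (3 - q) x mod 4 = 3 \<and> t x = 1"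
        using odd_mod_4_cases[OF odd[OF True]] by (auto simp: t_def)
      then show ?thesis
        using True i_powi_mod_4[of "hadamard_phase f (3 - q) x", symmetric]
        by (auto simp: apply_hadamard_full power_int_diff power3_eq_cube field_simps)
    qed (use x apply_hadamard_full_outside in simp)
  qed
qed

lemma stabilizer_form_hadamard_full: "stabilizer_form (apply_op (on_qubit q hadamard) v)"
proof (cases "\<exists>y\<in>A. odd (hadamard_phase f (3 - q) y)")
  case True
  then obtain y where y: "y \<in> A" "odd (hadamard_phase f (3 - q) y)" by blast
  show ?thesis
  proof (rule stabilizer_form_hadamard_odd)
    fix x assume "x \<in> A"
    then have "even (hadamard_phase f (3 - q) x - hadamard_phase f (3 - q) y)"
      by (rule hadamard_phase_parity[OF y(1)])
    then show "odd (hadamard_phase f (3 - q) x)"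
      using y(2) by (metis diff_add_cancel even_add)
  qed
next
  case False
  then show ?thesis by (intro stabilizer_form_hadamard_even) auto
qed

end

context
  assumes sparse: "\<And>x. x \<in> A \<Longrightarrow> flip_bit (3 - q) x \<notin> A"
begin

lemma flip_rep_unique: "u \<in> A \<Longrightarrow> u = w \<or> u = flip_bit (3 - q) w \<Longrightarrow> flip_rep A (3 - q) w = u"
  using sparse[of w] by (auto simp: flip_rep_def)

lemma flip_rep_near: "flip_rep A n x = x \<or> flip_rep A n x = flip_bit n x"
  by (simp add: flip_rep_def)

lemma flip_rep_mem: "flip_rep A n ` flip_hull n A \<subseteq> A"
  by (auto simp: flip_rep_def flip_hull_def)

lemma flip_rep_xor_near:
  "flip_rep A n x XOR flip_rep A n y XOR flip_rep A n z = x XOR y XOR z \<or>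
   flip_rep A n x XOR flip_rep A n y XOR flip_rep A n z = flip_bit n (x XOR y XOR z)"
  using flip_rep_near[of n x] flip_rep_near[of n y] flip_rep_near[of n z]
  unfolding eq_or_flip_bit_iff by (auto simp: bit_xor_iff)

lemma flip_rep_xor_mem:
  "x \<in> flip_hull n A \<Longrightarrow> y \<in> flip_hull n A \<Longrightarrow> z \<in> flip_hull n A \<Longrightarrow>
    flip_rep A n x XOR flip_rep A n y XOR flip_rep A n z \<in> A"
  using flip_rep_mem by (auto intro: xor_affineD[OF A])

lemma flip_rep_xor_affine_map: "xor_affine_map (flip_hull (3 - q) A) (flip_rep A (3 - q))"
  unfolding xor_affine_map_def
  using flip_rep_unique[OF flip_rep_xor_mem flip_rep_xor_near] by blast

lemma xor_affine_flip_hull: "xor_affine (flip_hull (3 - q) A)"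
  unfolding xor_affine_def
proof (intro conjI ballI)
  fix x y z assume xyz: "x \<in> flip_hull (3 - q) A" "y \<in> flip_hull (3 - q) A" "z \<in> flip_hull (3 - q) A"
  then have "x XOR y XOR z < 16" by (simp add: flip_hull_def xor_less_16)
  then show "x XOR y XOR z \<in> flip_hull (3 - q) A"
    using flip_rep_xor_mem[OF xyz] flip_rep_xor_near[of "3 - q" x y z] by (auto simp: flip_hull_def)
qed (auto simp: flip_hull_def)

lemma apply_hadamard_sparse:
  assumes x: "x < 16"
  shows "apply_op (on_qubit q hadamard) v x = (if x \<in> flip_hull (3 - q) A
    then c / complex_of_real (sqrt 2) * \<i> powi (f (flip_rep A (3 - q) x)
      + 2 * of_bool (bit x (3 - q)) * of_bool (bit (flip_rep A (3 - q) x) (3 - q))) else 0)"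
proof -
  let ?n = "3 - q" and ?s = "flip_rep A (3 - q) x"
  have lo_hi_16: "unset_bit ?n x < 16" "set_bit ?n x < 16"
    using x q by (simp_all add: unset_bit_less_16 set_bit_less_16)
  have lo_hi_near: "unset_bit ?n x = x \<or> unset_bit ?n x = flip_bit ?n x"
      "set_bit ?n x = x \<or> set_bit ?n x = flip_bit ?n x"
    by (simp_all add: eq_or_flip_bit_iff bit_simps)
  show ?thesis
  proof (cases "x \<in> flip_hull ?n A")
    case True
    then have s: "?s \<in> A" using flip_rep_mem by blast
    show ?thesis
    proof (cases "bit ?s ?n")
      case True
      then have "?s = set_bit ?n x" by (rule unset_set_bit_of_eq_or_flip(1)[OF flip_rep_near])
      moreover from this have "unset_bit ?n x \<notin> A"
        using flip_rep_unique[of "unset_bit ?n x" x] lo_hi_near(1) unset_bit_ne_set_bit[of ?n x] by auto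
      ultimately show ?thesis
        using \<open>x \<in> flip_hull ?n A\<close> True s lo_hi_16 x q
        by (simp add: apply_hadamard v power_int_add power_int_mult)
    next
      case False
      then have "?s = unset_bit ?n x" by (rule unset_set_bit_of_eq_or_flip(2)[OF flip_rep_near])
      moreover from this have "set_bit ?n x \<notin> A"
        using flip_rep_unique[of "set_bit ?n x" x] lo_hi_near(2) unset_bit_ne_set_bit[of ?n x] by auto
      ultimately show ?thesis
        using \<open>x \<in> flip_hull ?n A\<close> False s lo_hi_16 x q by (simp add: apply_hadamard v)
    qed
  next
    case False
    then have "unset_bit ?n x \<notin> A" "set_bit ?n x \<notin> A"
      using lo_hi_near x by (auto simp: flip_hull_def)
    then show ?thesis using False lo_hi_16 x q by (simp add: apply_hadamard v)
  qed
qed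

lemma stabilizer_form_hadamard_sparse: "stabilizer_form (apply_op (on_qubit q hadamard) v)"
  by (rule stabilizer_formI[OF xor_affine_flip_hull _ apply_hadamard_sparse])
    (intro quadratic_phase_add quadratic_phase_comp[OF f flip_rep_mem flip_rep_xor_affine_map]
      quadratic_phase_double_product affine_bit_bit
      affine_bit_comp[OF affine_bit_bit flip_rep_mem flip_rep_xor_affine_map])

end

lemma stabilizer_form_hadamard_of_form: "stabilizer_form (apply_op (on_qubit q hadamard) v)"
proof (cases "\<exists>y\<in>A. flip_bit (3 - q) y \<in> A")
  case True
  then obtain y where y: "y \<in> A" "flip_bit (3 - q) y \<in> A" by blast
  have flip_eq: "flip_bit (3 - q) x = x XOR y XOR flip_bit (3 - q) y" for x
    by (rule bit_eqI) (auto simp: bit_xor_iff bit_flip_bit_iff)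
  have "flip_bit (3 - q) x \<in> A" if "x \<in> A" for x
    unfolding flip_eq[of x] by (rule xor_affineD[OF A that y])
  then show ?thesis by (rule stabilizer_form_hadamard_full)
next
  case False
  then show ?thesis by (intro stabilizer_form_hadamard_sparse) auto
qed

end

lemma stabilizer_form_hadamard:
  assumes "stabilizer_form v" "q < 4"
  shows "stabilizer_form (apply_op (on_qubit q hadamard) v)"
proof -
  obtain A f c where A: "xor_affine A" and f: "quadratic_phase A f"
    and v: "\<And>x. x < 16 \<Longrightarrow> v x = (if x \<in> A then c * \<i> powi f x else 0)"
    using assms(1) by (auto simp: stabilizer_form_def)
  show ?thesis by (rule stabilizer_form_hadamard_of_form[OF A f v assms(2)])
qed

lemma stabilizer_form_clifford: "C \<in> clifford4 \<Longrightarrow> stabilizer_form (\<lambda>i. C i 0)"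
proof (induction rule: clifford4.induct)
  case clifford_id
  show ?case by (rule stabilizer_form_ket0)
next
  case (clifford_H C q)
  then show ?case by (simp add: mmult_column stabilizer_form_hadamard)
next
  case (clifford_S C q)
  then show ?case by (simp add: mmult_column stabilizer_form_phaseS)
next
  case (clifford_CNOT C c t)
  then show ?case by (simp add: mmult_column stabilizer_form_cnot)
qed

lemma stabilizer_form_modulus:
  assumes "stabilizer_form v"
  obtains m where "\<And>x. x < 16 \<Longrightarrow> v x \<noteq> 0 \<Longrightarrow> cmod (v x) = m"
proof -
  obtain A f c where v: "\<And>x. x < 16 \<Longrightarrow> v x = (if x \<in> A then c * \<i> powi f x else 0)"
    using assms by (auto simp: stabilizer_form_def)
  have "cmod (v x) = cmod c" if "x < 16" "v x \<noteq> 0" for x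
    using that v[OF that(1)] by (auto simp: norm_mult norm_power_int)
  then show ?thesis by (rule that)
qed

lemma stabilizer_form_support_xor:
  assumes "stabilizer_form v" "x < 16" "y < 16" "z < 16" "v x \<noteq> 0" "v y \<noteq> 0" "v z \<noteq> 0"
  shows "v (x XOR y XOR z) \<noteq> 0"
proof -
  obtain A f c where A: "xor_affine A"
    and v: "\<And>x. x < 16 \<Longrightarrow> v x = (if x \<in> A then c * \<i> powi f x else 0)"
    using assms(1) by (auto simp: stabilizer_form_def)
  have "v x \<noteq> 0 \<longleftrightarrow> x \<in> A \<and> c \<noteq> 0" if "x < 16" for x
    using v[OF that] by auto
  then show ?thesis
    using assms(2-) xor_affineD[OF A] by (simp add: xor_less_16)
qed

section \<open>Two witnesses that are nonnegative on stabilizer states\<close>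

lemma flat_sum_bounds:
  fixes v :: "nat \<Rightarrow> complex" and m :: real
  assumes X: "finite X" and flat: "\<And>x. x \<in> X \<Longrightarrow> v x \<noteq> 0 \<Longrightarrow> cmod (v x) = m"
  defines "N \<equiv> {x \<in> X. v x \<noteq> 0}"
  shows "(cmod (\<Sum>x\<in>X. v x))\<^sup>2 \<le> (card N * m)\<^sup>2"
    and "(\<Sum>x\<in>X. (cmod (v x))\<^sup>2) = card N * m\<^sup>2"
proof -
  have N: "finite N" "N \<subseteq> X" using X by (auto simp: N_def)
  have "(\<Sum>x\<in>X. v x) = (\<Sum>x\<in>N. v x)"
    using N by (intro sum.mono_neutral_right) (auto simp: N_def X)
  then have "cmod (\<Sum>x\<in>X. v x) \<le> (\<Sum>x\<in>N. cmod (v x))"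
    by (simp add: norm_sum)
  also have "\<dots> = card N * m"
    using flat by (simp add: N_def)
  finally show "(cmod (\<Sum>x\<in>X. v x))\<^sup>2 \<le> (card N * m)\<^sup>2"
    by (simp add: power_mono)
  have "(\<Sum>x\<in>X. (cmod (v x))\<^sup>2) = (\<Sum>x\<in>N. (cmod (v x))\<^sup>2)"
    using N by (intro sum.mono_neutral_right) (auto simp: N_def X)
  also have "\<dots> = card N * m\<^sup>2"
    using flat by (simp add: N_def)
  finally show "(\<Sum>x\<in>X. (cmod (v x))\<^sup>2) = card N * m\<^sup>2" .
qed

lemma square_le_twice_if_le_2: "n \<le> 2 \<Longrightarrow> (real n * m)\<^sup>2 \<le> 2 * (real n * m\<^sup>2)"
  by (auto simp: le_Suc_eq numeral_2_eq_2 power_mult_distrib)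

lemma stabilizer_form_witness_ineq:
  assumes "stabilizer_form p"
  shows "(cmod (\<Sum>x\<in>{3,5,6}. p x))\<^sup>2 \<le> 3 * (cmod (p 0))\<^sup>2 + 2 * (\<Sum>x\<in>{3,5,6}. (cmod (p x))\<^sup>2)"
proof -
  obtain m where flat: "\<And>x. x < 16 \<Longrightarrow> p x \<noteq> 0 \<Longrightarrow> cmod (p x) = m"
    using stabilizer_form_modulus[OF assms] by blast
  define N where "N = {x \<in> {3,5,6::nat}. p x \<noteq> 0}"
  have "finite {3,5,6::nat}" "\<And>x. x \<in> {3,5,6} \<Longrightarrow> p x \<noteq> 0 \<Longrightarrow> cmod (p x) = m"
    using flat by auto
  note bounds = flat_sum_bounds[where v = p, OF this, folded N_def]
  have sub: "N \<subseteq> {3,5,6}" unfolding N_def by blast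
  then have "card N \<le> 3" using card_mono[OF _ sub] by simp
  then consider "card N = 3" | "card N \<le> 2" by linarith
  then show ?thesis
  proof cases
    case 1
    then have "N = {3,5,6}" using card_subset_eq[OF _ sub] by simp
    then have "p 3 \<noteq> 0" "p 5 \<noteq> 0" "p 6 \<noteq> 0" unfolding N_def by blast+
    then have "p 0 \<noteq> 0"
      using stabilizer_form_support_xor[OF assms, of 3 5 6] by (simp add: numeral_3_eq_3[symmetric])
    then have "(cmod (p 0))\<^sup>2 = m\<^sup>2" using flat[of 0] by simp
    then show ?thesis using bounds 1 by (simp add: power_mult_distrib del: sum.insert)
  next
    case 2
    then have "(card N * m)\<^sup>2 \<le> 2 * (card N * m\<^sup>2)" by (rule square_le_twice_if_le_2)
    then show ?thesis using bounds by (smt (verit) zero_le_power2)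
  qed
qed

lemma xor_triples_of_weight_3: "x \<in> {7,11,13,14} \<Longrightarrow> y \<in> {7,11,13,14} \<Longrightarrow> z \<in> {7,11,13,14} \<Longrightarrow>
    x \<noteq> y \<Longrightarrow> y \<noteq> z \<Longrightarrow> x \<noteq> z \<Longrightarrow> x XOR y XOR z \<in> {1,2,4,8::nat}"
  by (auto simp: numeral_3_eq_3[symmetric])

lemma stabilizer_form_triple_support:
  assumes "stabilizer_form v" "X \<subseteq> {..<16}" "3 \<le> card {x \<in> X. v x \<noteq> 0}"
  obtains x y z where "x \<in> X" "y \<in> X" "z \<in> X" "x \<noteq> y" "y \<noteq> z" "x \<noteq> z" "v (x XOR y XOR z) \<noteq> 0"
proof -
  obtain T where T: "T \<subseteq> {x \<in> X. v x \<noteq> 0}" "card T = 3"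
    using obtain_subset_with_card_n[OF assms(3)] by blast
  obtain x y z where xyz: "T = {x, y, z}" "x \<noteq> y" "y \<noteq> z" "x \<noteq> z"
    using T(2) card_3_iff[of T] by blast
  then have in_X: "x \<in> X" "y \<in> X" "z \<in> X" and "v x \<noteq> 0" "v y \<noteq> 0" "v z \<noteq> 0"
    using T(1) by auto
  then have "v (x XOR y XOR z) \<noteq> 0"
    using assms(2) by (intro stabilizer_form_support_xor[OF assms(1)]) auto
  with in_X xyz(2-4) show ?thesis by (rule that)
qed

lemma stabilizer_form_undamped_witness_ineq:
  assumes "stabilizer_form v"
  shows "(cmod (\<Sum>x\<in>{7,11,13,14}. v x))\<^sup>2 \<le>
    2 * (\<Sum>x\<in>{7,11,13,14}. (cmod (v x))\<^sup>2) + 16 * (\<Sum>x\<in>{1,2,4,8}. (cmod (v x))\<^sup>2)"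
proof -
  obtain m where flat: "\<And>x. x < 16 \<Longrightarrow> v x \<noteq> 0 \<Longrightarrow> cmod (v x) = m"
    using stabilizer_form_modulus[OF assms] by blast
  define N where "N = {x \<in> {7,11,13,14::nat}. v x \<noteq> 0}"
  have "finite {7,11,13,14::nat}" "\<And>x. x \<in> {7,11,13,14} \<Longrightarrow> v x \<noteq> 0 \<Longrightarrow> cmod (v x) = m"
    using flat by auto
  note bounds = flat_sum_bounds[where v = v, OF this, folded N_def]
  have Y_nonneg: "0 \<le> (\<Sum>x\<in>{1,2,4,8::nat}. (cmod (v x))\<^sup>2)" by (intro sum_nonneg) simp
  have sub: "N \<subseteq> {7,11,13,14}" unfolding N_def by blast
  then have "card N \<le> 4" using card_mono[OF _ sub] by simp
  then consider "card N \<le> 2" | "3 \<le> card N" "card N \<le> 4" by linarith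
  then show ?thesis
  proof cases
    case 1
    then have "(card N * m)\<^sup>2 \<le> 2 * (card N * m\<^sup>2)" by (rule square_le_twice_if_le_2)
    then show ?thesis using bounds Y_nonneg by (smt (verit))
  next
    case 2
    then obtain x y z where "x \<in> {7,11,13,14}" "y \<in> {7,11,13,14}" "z \<in> {7,11,13,14}"
      "x \<noteq> y" "y \<noteq> z" "x \<noteq> z" and nz: "v (x XOR y XOR z) \<noteq> 0"
      using stabilizer_form_triple_support[OF assms _ 2(1)[unfolded N_def]] by auto
    then have "x XOR y XOR z \<in> {1,2,4,8}" by (intro xor_triples_of_weight_3)
    then have "m\<^sup>2 \<le> (\<Sum>x\<in>{1,2,4,8::nat}. (cmod (v x))\<^sup>2)"
      using flat[of "x XOR y XOR z"] nz member_le_sum[of "x XOR y XOR z" "{1,2,4,8}" "\<lambda>x. (cmod (v x))\<^sup>2"]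
      by auto
    moreover have "(card N * m)\<^sup>2 \<le> 16 * m\<^sup>2"
    proof -
      have "(real (card N))\<^sup>2 \<le> 4\<^sup>2" using 2(2) by (intro power_mono) simp_all
      then show ?thesis by (simp add: power_mult_distrib mult_right_mono)
    qed
    ultimately show ?thesis using bounds by (smt (verit) sum_nonneg zero_le_power2)
  qed
qed

definition block_sum :: "op4 \<Rightarrow> nat set \<Rightarrow> real" where
  "block_sum M S = Re (\<Sum>a\<in>S. \<Sum>b\<in>S. M a b)"

lemma block_sum_rank_one: "block_sum (\<lambda>a b. v a * cnj (v b)) S = (cmod (\<Sum>a\<in>S. v a))\<^sup>2"
proof -
  have "(\<Sum>a\<in>S. \<Sum>b\<in>S. v a * cnj (v b)) = (\<Sum>a\<in>S. v a) * cnj (\<Sum>a\<in>S. v a)"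
    by (simp add: sum_product cnj_sum)
  also have "\<dots> = of_real ((cmod (\<Sum>a\<in>S. v a))\<^sup>2)"
    by (rule complex_norm_square[symmetric])
  finally show ?thesis by (simp add: block_sum_def)
qed

lemma block_sum_combination:
  assumes "S \<subseteq> {..<16}" and \<rho>: "\<forall>a<16. \<forall>b<16. \<rho> a b = (\<Sum>k<n. of_real (w k) * \<sigma> k a b)"
  shows "block_sum \<rho> S = (\<Sum>k<n. w k * block_sum (\<sigma> k) S)"
proof -
  have "(\<Sum>a\<in>S. \<Sum>b\<in>S. \<rho> a b) = (\<Sum>a\<in>S. \<Sum>b\<in>S. \<Sum>k<n. of_real (w k) * \<sigma> k a b)"
    using assms by (intro sum.cong) auto
  also have "\<dots> = (\<Sum>a\<in>S. \<Sum>k<n. \<Sum>b\<in>S. of_real (w k) * \<sigma> k a b)"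
    by (rule sum.cong[OF refl]) (rule sum.swap)
  also have "\<dots> = (\<Sum>k<n. \<Sum>a\<in>S. \<Sum>b\<in>S. of_real (w k) * \<sigma> k a b)"
    by (rule sum.swap)
  also have "\<dots> = (\<Sum>k<n. of_real (w k) * (\<Sum>a\<in>S. \<Sum>b\<in>S. \<sigma> k a b))"
    by (simp add: sum_distrib_left)
  finally show ?thesis by (simp add: block_sum_def Re_sum)
qed

definition stab_witness :: "op4 \<Rightarrow> real" where
  "stab_witness M = 3 * block_sum M {0,15} + 2 * (block_sum M {3,12} + block_sum M {5,10} + block_sum M {6,9})
     - block_sum M {3,5,6,9,10,12}"

definition undamped_witness :: "op4 \<Rightarrow> real" where
  "undamped_witness M = 2 * (\<Sum>x\<in>{7,11,13,14}. block_sum M {x}) + 16 * (\<Sum>x\<in>{1,2,4,8}. block_sum M {x})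
     - block_sum M {7,11,13,14}"

lemma stab_witness_combination:
  assumes "\<forall>a<16. \<forall>b<16. \<rho> a b = (\<Sum>k<n. of_real (w k) * \<sigma> k a b)"
  shows "stab_witness \<rho> = (\<Sum>k<n. w k * stab_witness (\<sigma> k))"
  unfolding stab_witness_def using block_sum_combination[OF _ assms]
  by (simp add: sum_distrib_left sum.distrib sum_subtractf algebra_simps)

lemma undamped_witness_combination:
  assumes "\<forall>a<16. \<forall>b<16. \<rho> a b = (\<Sum>k<n. of_real (w k) * \<sigma> k a b)"
  shows "undamped_witness \<rho> = (\<Sum>k<n. w k * undamped_witness (\<sigma> k))"
  unfolding undamped_witness_def using block_sum_combination[OF _ assms]
  by (simp add: sum_distrib_left sum.distrib sum_subtractf algebra_simps)

lemma stab_dm_column: "stab_dm C = (\<lambda>a b. (\<lambda>i. C i 0) a * cnj ((\<lambda>i. C i 0) b))"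
  by (simp add: stab_dm_def)

lemma undamped_witness_clifford_nonneg:
  assumes "C \<in> clifford4"
  shows "0 \<le> undamped_witness (stab_dm C)"
  using stabilizer_form_undamped_witness_ineq[OF stabilizer_form_clifford[OF assms]]
  unfolding undamped_witness_def stab_dm_column block_sum_rank_one by simp

text \<open>
  The CNOTs from qubit 0 followed by \<open>H\<close> on qubit 0 send the pair sums \<open>v\<^sub>0 + v\<^sub>1\<^sub>5\<close>,
  \<open>v\<^sub>3 + v\<^sub>1\<^sub>2\<close>, \<open>v\<^sub>5 + v\<^sub>1\<^sub>0\<close>, \<open>v\<^sub>6 + v\<^sub>9\<close> to \<open>\<surd>2\<close> times the amplitudes at \<open>0, 3, 5, 6\<close>,
  which turns the witness into twice the form bounded in \<open>stabilizer_form_witness_ineq\<close>.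
\<close>

lemma stab_witness_clifford_nonneg:
  assumes "C \<in> clifford4"
  shows "0 \<le> stab_witness (stab_dm C)"
proof -
  define v where "v i = C i 0" for i
  define p where "p = apply_op (on_qubit 0 hadamard)
    (apply_op (cnot 0 3) (apply_op (cnot 0 2) (apply_op (cnot 0 1) v)))"
  let ?r = "complex_of_real (sqrt 2)"
  have "stabilizer_form p"
    unfolding p_def v_def
    by (intro stabilizer_form_hadamard stabilizer_form_cnot stabilizer_form_clifford[OF assms]) auto
  have "p 0 = (v 0 + v 15) / ?r" "p 3 = (v 3 + v 12) / ?r" "p 5 = (v 5 + v 10) / ?r" "p 6 = (v 6 + v 9) / ?r"
    by (simp_all add: p_def apply_hadamard_flip apply_cnot cnot_index_def flip_bit_nat_eq_arith bit_iff_odd)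
  then have p: "v 0 + v 15 = ?r * p 0" "v 3 + v 12 = ?r * p 3" "v 5 + v 10 = ?r * p 5" "v 6 + v 9 = ?r * p 6"
    by simp_all
  have r: "(cmod (?r * z))\<^sup>2 = 2 * (cmod z)\<^sup>2" for z
    by (simp add: norm_mult power_mult_distrib)
  have six: "(\<Sum>a\<in>{3,5,6,9,10,12}. v a) = ?r * (\<Sum>x\<in>{3,5,6}. p x)"
  proof -
    have "(\<Sum>a\<in>{3,5,6,9,10,12}. v a) = (v 3 + v 12) + (v 5 + v 10) + (v 6 + v 9)"
      by (simp add: add_ac)
    then show ?thesis by (simp add: p distrib_left)
  qed
  have "stab_witness (stab_dm C) = 3 * (cmod (v 0 + v 15))\<^sup>2
      + 2 * ((cmod (v 3 + v 12))\<^sup>2 + (cmod (v 5 + v 10))\<^sup>2 + (cmod (v 6 + v 9))\<^sup>2)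
      - (cmod (\<Sum>a\<in>{3,5,6,9,10,12}. v a))\<^sup>2"
    unfolding stab_witness_def stab_dm_column block_sum_rank_one v_def by simp
  also have "\<dots> = 2 * (3 * (cmod (p 0))\<^sup>2 + 2 * (\<Sum>x\<in>{3,5,6}. (cmod (p x))\<^sup>2) - (cmod (\<Sum>x\<in>{3,5,6}. p x))\<^sup>2)"
    unfolding six p r by simp
  finally show ?thesis
    using stabilizer_form_witness_ineq[OF \<open>stabilizer_form p\<close>] by simp
qed

lemma stabilizer_polytope_nonneg:
  fixes L :: "op4 \<Rightarrow> real"
  assumes "in_stabilizer_polytope \<rho>"
    and combination: "\<And>(n::nat) w (\<sigma>::nat \<Rightarrow> op4) \<rho>. \<forall>a<16. \<forall>b<16. \<rho> a b = (\<Sum>k<n. of_real (w k) * \<sigma> k a b)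
      \<Longrightarrow> L \<rho> = (\<Sum>k<n. w k * L (\<sigma> k))"
    and clifford: "\<And>C. C \<in> clifford4 \<Longrightarrow> 0 \<le> L (stab_dm C)"
  shows "0 \<le> L \<rho>"
proof -
  obtain n :: nat and w :: "nat \<Rightarrow> real" and \<sigma> :: "nat \<Rightarrow> op4"
    where w: "\<forall>k<n. 0 \<le> w k \<and> \<sigma> k \<in> pure_stabilizer_states"
      and \<rho>: "\<forall>a<16. \<forall>b<16. \<rho> a b = (\<Sum>k<n. of_real (w k) * \<sigma> k a b)"
    using assms(1) unfolding in_stabilizer_polytope_def by blast
  have "0 \<le> L (\<sigma> k)" if "k < n" for k
    using w that clifford by (auto simp: pure_stabilizer_states_def)
  then have "0 \<le> (\<Sum>k<n. w k * L (\<sigma> k))"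
    using w by (intro sum_nonneg) simp
  then show ?thesis using combination[OF \<rho>] by simp
qed

section \<open>The damped Dicke state\<close>

definition hamming_weight :: "nat \<Rightarrow> nat" where
  "hamming_weight x = bitq 0 x + bitq 1 x + bitq 2 x + bitq 3 x"

text \<open>
  \<open>K\<^sub>k\<close> annihilates \<open>|x\<rangle>\<close> unless every qubit in \<open>k\<close> is excited in \<open>x\<close>, and then yields
  \<open>\<surd>\<gamma>\<^bsup>|k|\<^esup> \<surd>(1-\<gamma>)\<^bsup>|x|-|k|\<^esup> |x - k\<rangle>\<close>; applied to \<open>|D\<^sub>4\<^sup>3\<rangle>\<close> this gives the amplitudes below.
\<close>

definition damped_amplitude :: "real \<Rightarrow> nat \<Rightarrow> nat \<Rightarrow> real" where
  "damped_amplitude g k a = (if a AND k = 0 \<and> hamming_weight (a OR k) = 3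
     then sqrt g ^ hamming_weight k * sqrt (1 - g) ^ (3 - hamming_weight k) / 2 else 0)"

lemma kraus_dicke43_table:
  "k < 16 \<Longrightarrow> a < 16 \<Longrightarrow>
    (kraus_ad4 g k a 7 + kraus_ad4 g k a 11 + kraus_ad4 g k a 13 + kraus_ad4 g k a 14) / 2
      = of_real (damped_amplitude g k a)"
  apply (drule less_16_cases, drule less_16_cases)
  apply (elim disjE)
  apply (simp_all add: kraus_ad4_def prod_less_4 kraus_ad_def damped_amplitude_def hamming_weight_def bitq_def
      power2_eq_square power3_eq_cube flip: of_real_mult)
  done

lemma kraus_dicke43:
  assumes "k < 16" "a < 16"
  shows "(\<Sum>i<16. kraus_ad4 g k a i * dicke43 i) = of_real (damped_amplitude g k a)"
proof -
  have "(\<Sum>i<16. kraus_ad4 g k a i * dicke43 i)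
      = (kraus_ad4 g k a 7 + kraus_ad4 g k a 11 + kraus_ad4 g k a 13 + kraus_ad4 g k a 14) / 2"
    by (simp add: sum_less_16 dicke43_def add_divide_distrib)
  also have "\<dots> = of_real (damped_amplitude g k a)"
    using assms by (rule kraus_dicke43_table)
  finally show ?thesis .
qed

lemma rho43_damped:
  assumes "a < 16" "b < 16"
  shows "rho43 g a b = (\<Sum>k<16. of_real (damped_amplitude g k a * damped_amplitude g k b))"
proof -
  have "rho43 g a b = (\<Sum>k<16. (\<Sum>i<16. kraus_ad4 g k a i * dicke43 i)
      * cnj (\<Sum>j<16. kraus_ad4 g k b j * dicke43 j))"
    unfolding rho43_def amp_damp4_def by (simp add: sum_product cnj_sum mult_ac)
  also have "\<dots> = (\<Sum>k<16. of_real (damped_amplitude g k a * damped_amplitude g k b))"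
    using assms by (intro sum.cong) (simp_all add: kraus_dicke43)
  finally show ?thesis .
qed

lemma damped_amplitude_mult:
  assumes "0 \<le> g" "g \<le> 1"
  shows "damped_amplitude g k a * damped_amplitude g k b =
    (if a AND k = 0 \<and> b AND k = 0 \<and> hamming_weight (a OR k) = 3 \<and> hamming_weight (b OR k) = 3
     then g ^ hamming_weight k * (1 - g) ^ (3 - hamming_weight k) / 4 else 0)"
proof -
  have "sqrt x ^ n * sqrt x ^ n = x ^ n" if "0 \<le> x" for x :: real and n
    using that by (simp flip: power_mult_distrib)
  then show ?thesis
    using assms by (simp add: damped_amplitude_def algebra_simps)
qed

definition rho_entry :: "real \<Rightarrow> nat \<Rightarrow> nat \<Rightarrow> real" where
  "rho_entry g a b =
    (if hamming_weight a \<noteq> hamming_weight b then 0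
     else if hamming_weight a = 0 then g ^ 3
     else if hamming_weight a = 1 then (if a = b then 3 else 1) * g\<^sup>2 * (1 - g) / 4
     else if hamming_weight a = 2 then (if a = b then 2 else if a AND b = 0 then 0 else 1) * g * (1 - g)\<^sup>2 / 4
     else if hamming_weight a = 3 then (1 - g) ^ 3 / 4
     else 0)"

lemma rho_entry_sum:
  "a < 16 \<Longrightarrow> b < 16 \<Longrightarrow> rho_entry g a b = (\<Sum>k<16.
    if a AND k = 0 \<and> b AND k = 0 \<and> hamming_weight (a OR k) = 3 \<and> hamming_weight (b OR k) = 3
    then g ^ hamming_weight k * (1 - g) ^ (3 - hamming_weight k) / 4 else 0)"
  apply (drule less_16_cases, drule less_16_cases)
  apply (elim disjE)
  apply (simp_all add: rho_entry_def hamming_weight_def bitq_def sum_less_16 power2_eq_square power3_eq_cube)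
  done

lemma rho43_eq:
  assumes "0 \<le> g" "g \<le> 1" "a < 16" "b < 16"
  shows "rho43 g a b = of_real (rho_entry g a b)"
  using assms by (simp add: rho43_damped damped_amplitude_mult rho_entry_sum)

lemma stab_witness_rho43:
  assumes "0 \<le> g" "g \<le> 1"
  shows "stab_witness (rho43 g) = 3 * g * (2 * g - 1)"
  using assms
  by (simp add: stab_witness_def block_sum_def rho43_eq rho_entry_def hamming_weight_def bitq_def)
    (simp add: algebra_simps power2_eq_square power3_eq_cube)

lemma undamped_witness_rho43: "undamped_witness (rho43 0) = -2"
  by (simp add: undamped_witness_def block_sum_def rho43_eq rho_entry_def hamming_weight_def bitq_def)

section \<open>A stabilizer decomposition for \<open>\<gamma> \<ge> 1/2\<close>\<close>

datatype gate = Hadamard nat | Phase nat | CNOT nat nat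

fun gate_op :: "gate \<Rightarrow> op4" where
  "gate_op (Hadamard q) = on_qubit q hadamard"
| "gate_op (Phase q) = on_qubit q phaseS"
| "gate_op (CNOT c t) = cnot c t"

fun valid_gate :: "gate \<Rightarrow> bool" where
  "valid_gate (Hadamard q) \<longleftrightarrow> q < 4"
| "valid_gate (Phase q) \<longleftrightarrow> q < 4"
| "valid_gate (CNOT c t) \<longleftrightarrow> c < 4 \<and> t < 4 \<and> c \<noteq> t"

definition run_circuit :: "gate list \<Rightarrow> nat \<Rightarrow> complex" where
  "run_circuit gs = fold (\<lambda>g. apply_op (gate_op g)) gs (\<lambda>i. of_bool (i = 0))"

definition clifford_state :: "(nat \<Rightarrow> complex) \<Rightarrow> bool" where
  "clifford_state v \<longleftrightarrow> (\<exists>C\<in>clifford4. \<forall>i<16. C i 0 = v i)"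

lemma clifford_state_gate:
  assumes "clifford_state v" "valid_gate g"
  shows "clifford_state (apply_op (gate_op g) v)"
proof -
  obtain C where C: "C \<in> clifford4" "\<And>i. i < 16 \<Longrightarrow> C i 0 = v i"
    using assms(1) by (auto simp: clifford_state_def)
  have "mmult (gate_op g) C \<in> clifford4"
    using assms(2) C(1) by (cases g) (auto intro: clifford4.intros)
  moreover have "mmult (gate_op g) C i 0 = apply_op (gate_op g) v i" for i
    using C(2) by (simp add: mmult_column cong: apply_op_cong)
  ultimately show ?thesis by (auto simp: clifford_state_def)
qed

lemma clifford_state_run_circuit:
  assumes "list_all valid_gate gs"
  shows "clifford_state (run_circuit gs)"
proof -
  have "clifford_state (fold (\<lambda>g. apply_op (gate_op g)) gs v)" if "clifford_state v" for v
    using assms that by (induction gs arbitrary: v) (auto intro: clifford_state_gate)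
  moreover have "clifford_state (\<lambda>i. of_bool (i = 0))"
    unfolding clifford_state_def by (intro bexI[OF _ clifford4.clifford_id]) (simp add: id4_def)
  ultimately show ?thesis by (simp add: run_circuit_def)
qed

definition signed_state :: "nat set \<Rightarrow> nat set \<Rightarrow> nat \<Rightarrow> real" where
  "signed_state P N i = (if i \<in> P then 1 else if i \<in> N then -1 else 0) / sqrt (card P + card N)"

definition stabilizer_vector :: "(nat \<Rightarrow> real) \<Rightarrow> bool" where
  "stabilizer_vector u \<longleftrightarrow> (\<exists>\<sigma>\<in>pure_stabilizer_states. \<forall>a<16. \<forall>b<16. \<sigma> a b = of_real (u a * u b))"

lemma stabilizer_vector_circuit:
  assumes "list_all valid_gate gs" "cmod \<kappa> = 1"
    and "\<forall>i<16. run_circuit gs i = \<kappa> * of_real (u i)"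
  shows "stabilizer_vector u"
proof -
  obtain C where C: "C \<in> clifford4" "\<And>i. i < 16 \<Longrightarrow> C i 0 = \<kappa> * of_real (u i)"
    using clifford_state_run_circuit[OF assms(1)] assms(3) by (auto simp: clifford_state_def)
  have "\<kappa> * cnj \<kappa> = 1" using assms(2) by (simp add: complex_norm_square[symmetric])
  then have "stab_dm C a b = of_real (u a * u b)" if "a < 16" "b < 16" for a b
    using that by (simp add: stab_dm_def C(2) mult_ac)
  then show ?thesis
    using C(1) by (auto simp: stabilizer_vector_def pure_stabilizer_states_def)
qed

lemma sqrt_2_mult_self: "complex_of_real (sqrt 2) * complex_of_real (sqrt 2) = 2"
  by (simp flip: of_real_mult)

lemma sqrt_8: "sqrt 8 = 2 * sqrt (2::real)"
proof -
  have "sqrt 8 = sqrt (2\<^sup>2 * 2::real)" by simp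
  then show ?thesis by (simp only: real_sqrt_mult real_sqrt_abs)
qed

text \<open>
  The gates are deliberately not expanded through the general formula for \<^const>\<open>on_qubit\<close>:
  for \<open>S\<close> its vanishing off-diagonal term would still be evaluated recursively, doubling the
  work at every phase gate.
\<close>

lemmas circuit_eval = all_less_16 sqrt_2_mult_self sqrt_8 run_circuit_def apply_hadamard_flip apply_phaseS
  apply_cnot cnot_index_def flip_bit_nat_eq_arith bit_iff_odd

lemma stabilizer_vector_basis_states:
  "stabilizer_vector (signed_state {0} {})"
  "stabilizer_vector (signed_state {8} {})"
  "stabilizer_vector (signed_state {4} {})"
  "stabilizer_vector (signed_state {2} {})"
  "stabilizer_vector (signed_state {1} {})"
proof -
  show "stabilizer_vector (signed_state {0} {})"
    by (rule stabilizer_vector_circuit[of "[]" 1]) (simp_all add: circuit_eval signed_state_def)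
  show "stabilizer_vector (signed_state {8} {})"
    by (rule stabilizer_vector_circuit[of "[Hadamard 0, Phase 0, Phase 0, Hadamard 0]" 1]) (simp_all add: circuit_eval signed_state_def)
  show "stabilizer_vector (signed_state {4} {})"
    by (rule stabilizer_vector_circuit[of "[Hadamard 1, Phase 1, Phase 1, Hadamard 1]" 1]) (simp_all add: circuit_eval signed_state_def)
  show "stabilizer_vector (signed_state {2} {})"
    by (rule stabilizer_vector_circuit[of "[Hadamard 2, Phase 2, Phase 2, Hadamard 2]" 1]) (simp_all add: circuit_eval signed_state_def)
  show "stabilizer_vector (signed_state {1} {})"
    by (rule stabilizer_vector_circuit[of "[Hadamard 3, Phase 3, Phase 3, Hadamard 3]" 1]) (simp_all add: circuit_eval signed_state_def)
qed

lemma stabilizer_vector_pair_states: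
  "stabilizer_vector (signed_state {4,8} {})"
  "stabilizer_vector (signed_state {2,8} {})"
  "stabilizer_vector (signed_state {1,8} {})"
  "stabilizer_vector (signed_state {2,4} {})"
  "stabilizer_vector (signed_state {1,4} {})"
  "stabilizer_vector (signed_state {1,2} {})"
proof -
  show "stabilizer_vector (signed_state {4,8} {})"
    by (rule stabilizer_vector_circuit[of "[Hadamard 0, CNOT 0 1, Hadamard 0, Phase 0, Phase 0, Hadamard 0]" 1]) (simp_all add: circuit_eval signed_state_def)
  show "stabilizer_vector (signed_state {2,8} {})"
    by (rule stabilizer_vector_circuit[of "[Hadamard 0, CNOT 0 2, Hadamard 0, Phase 0, Phase 0, Hadamard 0]" 1]) (simp_all add: circuit_eval signed_state_def)
  show "stabilizer_vector (signed_state {1,8} {})"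
    by (rule stabilizer_vector_circuit[of "[Hadamard 0, CNOT 0 3, Hadamard 0, Phase 0, Phase 0, Hadamard 0]" 1]) (simp_all add: circuit_eval signed_state_def)
  show "stabilizer_vector (signed_state {2,4} {})"
    by (rule stabilizer_vector_circuit[of "[Hadamard 1, CNOT 1 2, Hadamard 1, Phase 1, Phase 1, Hadamard 1]" 1]) (simp_all add: circuit_eval signed_state_def)
  show "stabilizer_vector (signed_state {1,4} {})"
    by (rule stabilizer_vector_circuit[of "[Hadamard 1, CNOT 1 3, Hadamard 1, Phase 1, Phase 1, Hadamard 1]" 1]) (simp_all add: circuit_eval signed_state_def)
  show "stabilizer_vector (signed_state {1,2} {})"
    by (rule stabilizer_vector_circuit[of "[Hadamard 2, CNOT 2 3, Hadamard 2, Phase 2, Phase 2, Hadamard 2]" 1]) (simp_all add: circuit_eval signed_state_def)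
qed

lemma stabilizer_vector_weight_two_states:
  "stabilizer_vector (signed_state {0,3,5,6} {})"
  "stabilizer_vector (signed_state {0} {3,5,6})"
  "stabilizer_vector (signed_state {0,3,9,10} {})"
  "stabilizer_vector (signed_state {0} {3,9,10})"
  "stabilizer_vector (signed_state {0,5,9,12} {})"
  "stabilizer_vector (signed_state {0} {5,9,12})"
  "stabilizer_vector (signed_state {0,6,10,12} {})"
  "stabilizer_vector (signed_state {0} {6,10,12})"
proof -
  show "stabilizer_vector (signed_state {0,3,5,6} {})"
    by (rule stabilizer_vector_circuit[of "[Hadamard 1, Hadamard 2, CNOT 1 3, CNOT 2 3]" 1]) (simp_all add: circuit_eval signed_state_def)
  show "stabilizer_vector (signed_state {0} {3,5,6})"
    by (rule stabilizer_vector_circuit[of "[Hadamard 1, Hadamard 2, CNOT 1 3, CNOT 2 3, Phase 1, Phase 2, Phase 3]" 1]) (simp_all add: circuit_eval signed_state_def)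
  show "stabilizer_vector (signed_state {0,3,9,10} {})"
    by (rule stabilizer_vector_circuit[of "[Hadamard 0, Hadamard 2, CNOT 0 3, CNOT 2 3]" 1]) (simp_all add: circuit_eval signed_state_def)
  show "stabilizer_vector (signed_state {0} {3,9,10})"
    by (rule stabilizer_vector_circuit[of "[Hadamard 0, Hadamard 2, CNOT 0 3, CNOT 2 3, Phase 0, Phase 2, Phase 3]" 1]) (simp_all add: circuit_eval signed_state_def)
  show "stabilizer_vector (signed_state {0,5,9,12} {})"
    by (rule stabilizer_vector_circuit[of "[Hadamard 0, Hadamard 1, CNOT 0 3, CNOT 1 3]" 1]) (simp_all add: circuit_eval signed_state_def)
  show "stabilizer_vector (signed_state {0} {5,9,12})"
    by (rule stabilizer_vector_circuit[of "[Hadamard 0, Hadamard 1, CNOT 0 3, CNOT 1 3, Phase 0, Phase 1, Phase 3]" 1]) (simp_all add: circuit_eval signed_state_def)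
  show "stabilizer_vector (signed_state {0,6,10,12} {})"
    by (rule stabilizer_vector_circuit[of "[Hadamard 0, Hadamard 1, CNOT 0 2, CNOT 1 2]" 1]) (simp_all add: circuit_eval signed_state_def)
  show "stabilizer_vector (signed_state {0} {6,10,12})"
    by (rule stabilizer_vector_circuit[of "[Hadamard 0, Hadamard 1, CNOT 0 2, CNOT 1 2, Phase 0, Phase 1, Phase 2]" 1]) (simp_all add: circuit_eval signed_state_def)
qed

lemma stabilizer_vector_odd_weight_states:
  "stabilizer_vector (signed_state {1,2,4,7,8,11,13,14} {})"
  "stabilizer_vector (signed_state {1,2,4,8} {7,11,13,14})"
proof -
  show "stabilizer_vector (signed_state {1,2,4,7,8,11,13,14} {})"
    by (rule stabilizer_vector_circuit[of "[Hadamard 3, Phase 3, Phase 3, Hadamard 3, Hadamard 0, Hadamard 1, Hadamard 2, CNOT 0 3, CNOT 1 3, CNOT 2 3]" 1]) (simp_all add: circuit_eval signed_state_def)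
  show "stabilizer_vector (signed_state {1,2,4,8} {7,11,13,14})"
    by (rule stabilizer_vector_circuit[of "[Hadamard 3, Phase 3, Phase 3, Hadamard 3, Hadamard 0, Hadamard 1, Hadamard 2, CNOT 0 3, CNOT 1 3, CNOT 2 3, Phase 0, Phase 1, Phase 2, Phase 3]" \<i>]) (simp_all add: circuit_eval signed_state_def)
qed

text \<open>The weights are nonnegative exactly when \<open>\<gamma> \<ge> 1/2\<close>.\<close>

definition stabilizer_mixture :: "real \<Rightarrow> (real \<times> (nat \<Rightarrow> real)) list" where
  "stabilizer_mixture g =
    [(g * (2 * g - 1), signed_state {0} {}),
     ((1 - g) ^ 3 / 2, signed_state {8} {}), ((1 - g) ^ 3 / 2, signed_state {4} {}),
     ((1 - g) ^ 3 / 2, signed_state {2} {}), ((1 - g) ^ 3 / 2, signed_state {1} {}),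
     ((1 - g) * (2 * g - 1) / 2, signed_state {4,8} {}), ((1 - g) * (2 * g - 1) / 2, signed_state {2,8} {}),
     ((1 - g) * (2 * g - 1) / 2, signed_state {1,8} {}), ((1 - g) * (2 * g - 1) / 2, signed_state {2,4} {}),
     ((1 - g) * (2 * g - 1) / 2, signed_state {1,4} {}), ((1 - g) * (2 * g - 1) / 2, signed_state {1,2} {}),
     (g * (1 - g)\<^sup>2 / 2, signed_state {0,3,5,6} {}), (g * (1 - g)\<^sup>2 / 2, signed_state {0} {3,5,6}),
     (g * (1 - g)\<^sup>2 / 2, signed_state {0,3,9,10} {}), (g * (1 - g)\<^sup>2 / 2, signed_state {0} {3,9,10}),
     (g * (1 - g)\<^sup>2 / 2, signed_state {0,5,9,12} {}), (g * (1 - g)\<^sup>2 / 2, signed_state {0} {5,9,12}),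
     (g * (1 - g)\<^sup>2 / 2, signed_state {0,6,10,12} {}), (g * (1 - g)\<^sup>2 / 2, signed_state {0} {6,10,12}),
     ((1 - g) ^ 3, signed_state {1,2,4,7,8,11,13,14} {}), ((1 - g) ^ 3, signed_state {1,2,4,8} {7,11,13,14})]"

lemma in_stabilizer_polytope_mixture:
  assumes states: "\<forall>(w, u) \<in> set xs. 0 \<le> w \<and> stabilizer_vector u"
    and total: "(\<Sum>(w, u) \<leftarrow> xs. w) = 1"
    and entries: "\<forall>a<16. \<forall>b<16. \<rho> a b = of_real (\<Sum>(w, u) \<leftarrow> xs. w * (u a * u b))"
  shows "in_stabilizer_polytope \<rho>"
proof -
  define n where "n = length xs"
  define w where "w k = fst (xs ! k)" for k
  define u where "u k = snd (xs ! k)" for k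
  have wu: "0 \<le> w k \<and> stabilizer_vector (u k)" if "k < n" for k
    using states nth_mem[OF that[unfolded n_def]] unfolding w_def u_def by (cases "xs ! k") auto
  then have "\<exists>\<sigma>. \<sigma> \<in> pure_stabilizer_states \<and> (\<forall>a<16. \<forall>b<16. \<sigma> a b = of_real (u k a * u k b))" if "k < n" for k
    using that by (simp add: stabilizer_vector_def Bex_def)
  then obtain \<sigma> where \<sigma>: "\<And>k. k < n \<Longrightarrow> \<sigma> k \<in> pure_stabilizer_states \<and>
      (\<forall>a<16. \<forall>b<16. \<sigma> k a b = of_real (u k a * u k b))"
    by metis
  have list_sum: "(\<Sum>(w, u) \<leftarrow> xs. f w u) = (\<Sum>k<n. f (w k) (u k))" for f :: "real \<Rightarrow> (nat \<Rightarrow> real) \<Rightarrow> real"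
    by (simp add: sum_list_sum_nth n_def w_def u_def atLeast0LessThan case_prod_beta)
  show ?thesis
    unfolding in_stabilizer_polytope_def
  proof (intro exI conjI allI impI)
    show "0 \<le> w k" "\<sigma> k \<in> pure_stabilizer_states" if "k < n" for k
      using wu[OF that] \<sigma>[OF that] by auto
    show "(\<Sum>k<n. w k) = 1" using total list_sum[of "\<lambda>w u. w"] by simp
    fix a b :: nat assume "a < 16" "b < 16"
    then show "\<rho> a b = (\<Sum>k<n. of_real (w k) * \<sigma> k a b)"
      using entries list_sum[of "\<lambda>w u. w * (u a * u b)"] \<sigma> by (simp add: of_real_sum)
  qed
qed

lemma signed_state_mult:
  "signed_state P N a * signed_state P N b =
    (if a \<in> P then 1 else if a \<in> N then -1 else 0) * (if b \<in> P then 1 else if b \<in> N then -1 else 0)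
    / (card P + card N)"
  by (simp add: signed_state_def)

lemma rho_entry_mixture:
  "a < 16 \<Longrightarrow> b < 16 \<Longrightarrow> rho_entry g a b = (\<Sum>(w, u) \<leftarrow> stabilizer_mixture g. w * (u a * u b))"
  apply (drule less_16_cases, drule less_16_cases)
  apply (elim disjE)
  apply (simp_all add: stabilizer_mixture_def signed_state_mult rho_entry_def hamming_weight_def bitq_def)
  apply (simp_all add: algebra_simps power2_eq_square power3_eq_cube)
  done

lemma rho43_in_stabilizer_polytope:
  assumes "1/2 \<le> g" "g \<le> 1"
  shows "in_stabilizer_polytope (rho43 g)"
proof (rule in_stabilizer_polytope_mixture)
  show "\<forall>(w, u) \<in> set (stabilizer_mixture g). 0 \<le> w \<and> stabilizer_vector u"
    using assms stabilizer_vector_basis_states stabilizer_vector_pair_states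
      stabilizer_vector_weight_two_states stabilizer_vector_odd_weight_states
    by (simp add: stabilizer_mixture_def)
  show "(\<Sum>(w, u) \<leftarrow> stabilizer_mixture g. w) = 1"
    by (simp add: stabilizer_mixture_def algebra_simps power2_eq_square power3_eq_cube)
  show "\<forall>a<16. \<forall>b<16. rho43 g a b = of_real (\<Sum>(w, u) \<leftarrow> stabilizer_mixture g. w * (u a * u b))"
    using assms by (simp add: rho43_eq rho_entry_mixture)
qed

theorem propositionS3:
  fixes \<gamma> :: real
  assumes "0 \<le> \<gamma>" and "\<gamma> \<le> 1"
  shows "in_stabilizer_polytope (rho43 \<gamma>) \<longleftrightarrow> \<gamma> \<ge> 1/2"
proof
  assume P: "in_stabilizer_polytope (rho43 \<gamma>)"
  show "\<gamma> \<ge> 1/2"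
  proof (cases "\<gamma> = 0")
    case True
    have "0 \<le> undamped_witness (rho43 \<gamma>)"
      using P undamped_witness_combination undamped_witness_clifford_nonneg by (rule stabilizer_polytope_nonneg)
    with True show ?thesis by (simp add: undamped_witness_rho43)
  next
    case False
    have "0 \<le> stab_witness (rho43 \<gamma>)"
      using P stab_witness_combination stab_witness_clifford_nonneg by (rule stabilizer_polytope_nonneg)
    then have "0 \<le> \<gamma> * (2 * \<gamma> - 1)" using assms by (simp add: stab_witness_rho43)
    with False assms(1) show ?thesis by (simp add: zero_le_mult_iff)
  qed
next
  assume "\<gamma> \<ge> 1/2"
  then show "in_stabilizer_polytope (rho43 \<gamma>)" using assms(2) by (rule rho43_in_stabilizer_polytope)
qed

end
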